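(* Let $\{X_\gamma\}_{\gamma\in\Gamma}$ be a family of strictly convex real Banach spaces with $\dim(X_\gamma)\geq 2$ for every $\gamma\in\Gamma$, and let $Z_\infty=\bigoplus^{\ell_\infty}_{\gamma\in\Gamma}X_\gamma$. Then every element $z\in B_{Z_\infty}$ can be written as $z=\frac12(x+y)$ with $x,y$ extreme points of $B_{Z_\infty}$.
   Context: All Banach spaces are real. $Z_\infty=\bigoplus^{\ell_\infty}_{\gamma\in\Gamma}X_\gamma$ is the space of families $z=(z(\gamma))_{\gamma\in\Gamma}$ with $z(\gamma)\in X_\gamma$ and $\|z\|=\sup_\gamma\|z(\gamma)\|<\infty$; $B_{Z_\infty}$ is its closed unit ball. A Banach space is strictly convex if every point of its unit sphere is an extreme point of its closed unit ball. *)

theory Defs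
  imports "HOL-Analysis.Analysis"
begin

definition strictly_convex_subspace :: "'b::real_normed_vector set \<Rightarrow> bool" where
  "strictly_convex_subspace X \<longleftrightarrow>
     (\<forall>x\<in>X. norm x = 1 \<longrightarrow> x extreme_point_of (X \<inter> cball 0 1))"

definition linf_sum_ball :: "('g \<Rightarrow> 'b::real_normed_vector set) \<Rightarrow> ('g \<Rightarrow> 'b) set" where
  "linf_sum_ball X = {z. (\<forall>g. z g \<in> X g) \<and> (\<forall>g. norm (z g) \<le> 1)}"

definition fam_extreme_point_of :: "('g \<Rightarrow> 'b::real_vector) \<Rightarrow> ('g \<Rightarrow> 'b) set \<Rightarrow> bool" where
  "fam_extreme_point_of z S \<longleftrightarrow> z \<in> S \<and>
     (\<forall>x\<in>S. \<forall>y\<in>S. \<forall>t::real. 0 < t \<and> t < 1 \<and> x \<noteq> y \<longrightarrow>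
        z \<noteq> (\<lambda>g. (1 - t) *\<^sub>R x g + t *\<^sub>R y g))"

end

theory Submission
  imports Defs
begin

text \<open>In each coordinate space a vector z of norm at most 1 is the midpoint of two unit
  vectors: for z \<noteq> 0, move a unit vector p along a path on the unit sphere from z/\<parallel>z\<parallel> to
  -z/\<parallel>z\<parallel> (bent off the line through z, which needs dimension at least 2); the distance
  \<parallel>2z - p\<parallel> passes from \<bar>2\<parallel>z\<parallel> - 1\<bar> \<le> 1 to 2\<parallel>z\<parallel> + 1 \<ge> 1, so at some point q = 2z - p is a unit
  vector too. Choosing such p, q in every coordinate gives families of unit vectors, and by
  strict convexity of one coordinate where two points of the ball differ, such a family is
  an extreme point of the unit ball of the l-infinity sum.\<close>

lemma independent_pair_not_in_span_singleton:
  fixes z :: "'b::real_vector"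
  assumes "independent {u, v}" "u \<noteq> v"
  shows "\<exists>w\<in>{u, v}. w \<notin> span {z}"
proof (rule ccontr)
  assume "\<not> ?thesis"
  then have "dim {u, v} \<le> card {z}"
    by (intro real_vector.dim_le_card) auto
  moreover have "dim {u, v} = 2"
    using assms real_vector.dim_span_eq_card_independent[of "{u, v}"]
    by (simp add: real_vector.dim_span)
  ultimately show False by simp
qed

lemma scaleR_add_eq_0_not_in_span:
  fixes e w :: "'b::real_vector"
  assumes "e \<noteq> 0" "w \<notin> span {e}" "a *\<^sub>R e + b *\<^sub>R w = 0"
  shows "a = 0 \<and> b = 0"
proof -
  have "b = 0"
  proof (rule ccontr)
    assume "b \<noteq> 0"
    have "b *\<^sub>R w = (- a) *\<^sub>R e"
      using assms(3) by (simp add: eq_neg_iff_add_eq_0 add.commute)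
    then have "w = (- a / b) *\<^sub>R e"
      using \<open>b \<noteq> 0\<close> by (metis scaleR_scaleR scaleR_one divide_inverse_commute
          left_inverse)
    then show False
      using assms(2) by (metis span_base span_mul singletonI)
  qed
  then show ?thesis using assms by simp
qed

lemma unit_pair_with_midpoint_nonzero:
  fixes z w :: "'b::real_normed_vector"
  assumes S: "subspace S" and zS: "z \<in> S" and wS: "w \<in> S"
    and z0: "z \<noteq> 0" and nz: "norm z \<le> 1" and wz: "w \<notin> span {z}"
  shows "\<exists>p\<in>S. \<exists>q\<in>S. norm p = 1 \<and> norm q = 1 \<and> z = (1/2) *\<^sub>R (p + q)"
proof -
  define e where "e = z /\<^sub>R norm z"
  have eS: "e \<in> S" and ne: "norm e = 1" and e0: "e \<noteq> 0"
    using S zS z0 by (auto simp: e_def subspace_scale)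
  have we: "w \<notin> span {e}"
    using wz z0 by (auto simp: e_def span_singleton)
  define P where "P = (\<lambda>t::real. (1 - 2*t) *\<^sub>R e + (t*(1-t)) *\<^sub>R w)"
  have P0: "P t \<noteq> 0" for t
    using scaleR_add_eq_0_not_in_span[OF e0 we, of "1 - 2*t" "t*(1-t)"]
    by (auto simp: P_def)
  define G where "G = (\<lambda>t. P t /\<^sub>R norm (P t))"
  define h where "h = (\<lambda>t. norm (2 *\<^sub>R z - G t))"
  have "continuous_on {0..1} h"
    unfolding h_def G_def P_def using P0[unfolded P_def]
    by (intro continuous_intros) auto
  moreover have "h 0 \<le> 1"
  proof -
    have "2 *\<^sub>R z - e = (2 * norm z - 1) *\<^sub>R e"
      using z0 by (simp add: e_def algebra_simps)
    then have "h 0 = \<bar>2 * norm z - 1\<bar>"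
      using ne by (simp add: h_def G_def P_def)
    then show ?thesis using nz norm_ge_zero[of z] by (simp add: abs_le_iff)
  qed
  moreover have "1 \<le> h 1"
  proof -
    have "2 *\<^sub>R z + e = (2 * norm z + 1) *\<^sub>R e"
      using z0 by (simp add: e_def algebra_simps)
    then have "h 1 = 2 * norm z + 1"
      using ne by (simp add: h_def G_def P_def)
    then show ?thesis by simp
  qed
  ultimately obtain t where "h t = 1"
    using IVT'[of h 0 1 1] by auto
  define p where "p = G t"
  have "p \<in> S"
    unfolding p_def G_def P_def using S eS wS
    by (intro subspace_scale subspace_add) auto
  moreover have "2 *\<^sub>R z - p \<in> S"
    using S \<open>p \<in> S\<close> zS by (intro subspace_diff subspace_scale) auto
  moreover have "norm p = 1"
    using P0[of t] by (simp add: p_def G_def)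
  moreover have "norm (2 *\<^sub>R z - p) = 1"
    using \<open>h t = 1\<close> by (simp add: h_def p_def)
  moreover have "z = (1/2) *\<^sub>R (p + (2 *\<^sub>R z - p))"
    by (simp add: algebra_simps)
  ultimately show ?thesis by blast
qed

lemma unit_pair_with_midpoint:
  fixes z :: "'b::real_normed_vector"
  assumes S: "subspace S" and "u \<in> S" "v \<in> S" "independent {u, v}" "u \<noteq> v"
    and zS: "z \<in> S" and nz: "norm z \<le> 1"
  shows "\<exists>p\<in>S. \<exists>q\<in>S. norm p = 1 \<and> norm q = 1 \<and> z = (1/2) *\<^sub>R (p + q)"
proof (cases "z = 0")
  case True
  have "u \<noteq> 0"
    using \<open>independent {u, v}\<close> by (metis dependent_zero insertI1)
  define p where "p = u /\<^sub>R norm u"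
  have "p \<in> S" "- p \<in> S" "norm p = 1"
    using S \<open>u \<in> S\<close> \<open>u \<noteq> 0\<close> by (auto simp: p_def subspace_scale subspace_neg)
  then show ?thesis
    using True by (intro bexI[of _ p] bexI[of _ "- p"]) auto
next
  case False
  obtain w where "w \<in> S" "w \<notin> span {z}"
    using independent_pair_not_in_span_singleton[of u v z] assms by auto
  then show ?thesis
    using unit_pair_with_midpoint_nonzero[OF S zS _ False nz] by blast
qed

lemma fam_extreme_point_of_linf_sum_ball:
  assumes sc: "\<And>g. strictly_convex_subspace (X g)"
    and xX: "\<And>g. x g \<in> X g" and xn: "\<And>g. norm (x g) = 1"
  shows "fam_extreme_point_of x (linf_sum_ball X)"
  unfolding fam_extreme_point_of_def
proof (intro conjI ballI allI impI)
  show "x \<in> linf_sum_ball X"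
    using xX xn by (simp add: linf_sum_ball_def)
  fix a b and t :: real
  assume a: "a \<in> linf_sum_ball X" and b: "b \<in> linf_sum_ball X"
    and t: "0 < t \<and> t < 1 \<and> a \<noteq> b"
  then obtain g where g: "a g \<noteq> b g" by auto
  have "x g extreme_point_of (X g \<inter> cball 0 1)"
    using sc xX xn by (simp add: strictly_convex_subspace_def)
  moreover have "a g \<in> X g \<inter> cball 0 1" "b g \<in> X g \<inter> cball 0 1"
    using a b by (auto simp: linf_sum_ball_def)
  ultimately have "x g \<notin> open_segment (a g) (b g)"
    by (simp add: extreme_point_of_def)
  then have "x g \<noteq> (1 - t) *\<^sub>R a g + t *\<^sub>R b g"
    using g t by (auto simp: in_segment)
  then show "x \<noteq> (\<lambda>g. (1 - t) *\<^sub>R a g + t *\<^sub>R b g)" by metis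
qed

theorem proposition2p5:
  fixes X :: "'g \<Rightarrow> 'b::banach set"
  assumes subsp: "\<And>g. subspace (X g)"
    and clsd: "\<And>g. closed (X g)"
    and sc: "\<And>g. strictly_convex_subspace (X g)"
    and dim2: "\<And>g. \<exists>u\<in>X g. \<exists>v\<in>X g. u \<noteq> v \<and> independent {u, v}"
  shows "\<forall>z\<in>linf_sum_ball X. \<exists>x y. fam_extreme_point_of x (linf_sum_ball X) \<and>
            fam_extreme_point_of y (linf_sum_ball X) \<and> z = (\<lambda>g. (1/2) *\<^sub>R (x g + y g))"
proof
  fix z assume z: "z \<in> linf_sum_ball X"
  have "\<exists>p q. p \<in> X g \<and> q \<in> X g \<and> norm p = 1 \<and> norm q = 1 \<and> z g = (1/2) *\<^sub>R (p + q)"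
    for g
    using dim2[of g] unit_pair_with_midpoint[OF subsp, of _ g _ "z g"] z
    by (fastforce simp: linf_sum_ball_def)
  then obtain x y where "\<And>g. x g \<in> X g \<and> y g \<in> X g \<and> norm (x g) = 1 \<and> norm (y g) = 1
      \<and> z g = (1/2) *\<^sub>R (x g + y g)"
    by metis
  then show "\<exists>x y. fam_extreme_point_of x (linf_sum_ball X) \<and>
      fam_extreme_point_of y (linf_sum_ball X) \<and> z = (\<lambda>g. (1/2) *\<^sub>R (x g + y g))"
    using fam_extreme_point_of_linf_sum_ball[of X, OF sc] by blast
qed

end
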